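(* Let $p$ be a prime, $\mu\ge1$, $m=p^\mu$, and $n>1$. Let $A=(a_{ij})$ be a random symmetric $n\times n$ matrix over $\mathbf{Z}_m$, conditioned on $a_{11}\not\equiv 0\pmod p$. Then there is an $n\times n$ matrix $U$ (depending on $A$) such that $$UAU^T\equiv\begin{pmatrix} a_{11} & 0\\ 0 & A'\end{pmatrix}\pmod{p^\mu},$$ where the $1\times(n-1)$ and $(n-1)\times1$ off-diagonal blocks are zero and $A'$ is a random symmetric $(n-1)\times(n-1)$ matrix over $\mathbf{Z}_m$ (i.e. under the stated conditional distribution of $A$, $A'$ reduced mod $m$ is uniformly distributed over symmetric $(n-1)\times(n-1)$ matrices over $\mathbf{Z}_m$).
   Context: For a positive integer $m$, $\mathbf{Z}_m=\{1,2,\ldots,m\}$ (viewed as residues mod $m$). A random symmetric $n\times n$ matrix over $\mathbf{Z}_m$ is one whose entries $a_{ij}$, $i\le j$, are chosen independently and uniformly from $\mathbf{Z}_m$, with $a_{ji}=a_{ij}$. *)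

theory Defs
  imports "HOL-Probability.Probability_Mass_Function" "HOL-Number_Theory.Cong"
begin

text \<open>Square matrices of size n are represented as functions nat => nat => int,
  indexed by 0..n-1 (index 0 plays the role of the paper's index 1),
  and required to be 0 outside the index range so that sets of matrices are finite.\<close>

definition mat_prod :: "nat \<Rightarrow> (nat \<Rightarrow> nat \<Rightarrow> int) \<Rightarrow> (nat \<Rightarrow> nat \<Rightarrow> int) \<Rightarrow> (nat \<Rightarrow> nat \<Rightarrow> int)" where
  "mat_prod n X Y = (\<lambda>i j. if i < n \<and> j < n then (\<Sum>k<n. X i k * Y k j) else 0)"

definition mat_transpose :: "(nat \<Rightarrow> nat \<Rightarrow> int) \<Rightarrow> (nat \<Rightarrow> nat \<Rightarrow> int)" where
  "mat_transpose X = (\<lambda>i j. X j i)"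

text \<open>Z_m = {1,...,m}: the canonical representative of an integer in Z_m.\<close>
definition red :: "int \<Rightarrow> int \<Rightarrow> int" where
  "red m x = (x - 1) mod m + 1"

definition sym_mats :: "nat \<Rightarrow> int \<Rightarrow> (nat \<Rightarrow> nat \<Rightarrow> int) set" where
  "sym_mats n m = {A. (\<forall>i j. i < n \<and> j < n \<longrightarrow> A i j \<in> {1..m} \<and> A i j = A j i)
                    \<and> (\<forall>i j. \<not> (i < n \<and> j < n) \<longrightarrow> A i j = 0)}"

definition random_sym :: "nat \<Rightarrow> int \<Rightarrow> (nat \<Rightarrow> nat \<Rightarrow> int) pmf" where
  "random_sym n m = pmf_of_set (sym_mats n m)"

definition random_sym_cond :: "nat \<Rightarrow> int \<Rightarrow> int \<Rightarrow> (nat \<Rightarrow> nat \<Rightarrow> int) pmf" where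
  "random_sym_cond n m p = pmf_of_set {A \<in> sym_mats n m. \<not> p dvd A 0 0}"

definition lower_block_red :: "nat \<Rightarrow> int \<Rightarrow> (nat \<Rightarrow> nat \<Rightarrow> int) \<Rightarrow> (nat \<Rightarrow> nat \<Rightarrow> int)" where
  "lower_block_red n m B = (\<lambda>i j. if i < n - 1 \<and> j < n - 1 then red m (B (Suc i) (Suc j)) else 0)"

end

theory Submission
  imports Defs "HOL-Number_Theory.Modular_Inverse" "HOL-Computational_Algebra.Primes"
begin

text \<open>Clearing the first row and column of A with the integral matrix U whose rows are
  \<open>e\<^sub>0\<close> and \<open>a\<^sub>0\<^sub>0 e\<^sub>i - a\<^sub>0\<^sub>i e\<^sub>0\<close> turns A into a block diagonal matrix whose lower block
  \<open>B\<^sub>i\<^sub>j = a\<^sub>0\<^sub>0\<^sup>2 a\<^sub>i\<^sub>j - a\<^sub>0\<^sub>0 a\<^sub>0\<^sub>i a\<^sub>0\<^sub>j\<close> is \<open>a\<^sub>0\<^sub>0\<^sup>2\<close> times the Schur complement of \<open>a\<^sub>0\<^sub>0\<close>.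
  Since \<open>a\<^sub>0\<^sub>0\<close> is a unit mod \<open>p\<^sup>\<mu>\<close>, the entries \<open>a\<^sub>i\<^sub>j\<close> can be recovered from the first row and
  \<open>B\<^sub>i\<^sub>j mod m\<close>; hence A \<open>\<mapsto>\<close> (first row, B mod m) is a bijection from the conditioned
  matrices onto (admissible first rows) \<open>\<times>\<close> (symmetric matrices of size n - 1). It carries
  the uniform distribution to a product of uniform distributions, so B mod m is uniform.\<close>

lemma red_in_Zm:
  assumes "0 < m"
  shows "red m x \<in> {1..m}"
  using pos_mod_bound[OF assms, of "x - 1"] pos_mod_sign[OF assms, of "x - 1"]
  unfolding red_def atLeastAtMost_iff by linarith

lemma cong_red: "[red m x = x] (mod m)"
  unfolding red_def cong_def by (simp add: mod_add_left_eq)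

lemma red_eqI:
  assumes "y \<in> {1..m}" "[x = y] (mod m)"
  shows "red m x = y"
proof -
  have "(x - 1) mod m = (y - 1) mod m"
    using assms(2) unfolding cong_def by (metis mod_diff_cong)
  also have "\<dots> = y - 1"
    using assms(1) by simp
  finally show ?thesis by (simp add: red_def)
qed

lemma red_affine_inverse_left:
  assumes "[u * w = 1] (mod m)" "x \<in> {1..m}"
  shows "red m (w * (red m (u * x - t) + t)) = x"
proof (rule red_eqI[OF assms(2)])
  have "[w * (red m (u * x - t) + t) = w * ((u * x - t) + t)] (mod m)"
    by (intro cong_mult cong_add cong_refl cong_red)
  also have "w * ((u * x - t) + t) = (u * w) * x"
    by (simp add: algebra_simps)
  also have "[\<dots> = 1 * x] (mod m)"
    by (intro cong_mult assms(1) cong_refl)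
  finally show "[w * (red m (u * x - t) + t) = x] (mod m)"
    by simp
qed

lemma red_affine_inverse_right:
  assumes "[u * w = 1] (mod m)" "y \<in> {1..m}"
  shows "red m (u * red m (w * (y + t)) - t) = y"
proof (rule red_eqI[OF assms(2)])
  have "[u * red m (w * (y + t)) - t = u * (w * (y + t)) - t] (mod m)"
    by (intro cong_diff cong_mult cong_refl cong_red)
  also have "u * (w * (y + t)) - t = (u * w) * (y + t) - t"
    by (simp add: algebra_simps)
  also have "[\<dots> = 1 * (y + t) - t] (mod m)"
    by (intro cong_diff cong_mult assms(1) cong_refl)
  finally show "[u * red m (w * (y + t)) - t = y] (mod m)"
    by simp
qed

lemma finite_sym_mats: "finite (sym_mats n m)"
proof -
  define W where
    "W = {f :: nat \<Rightarrow> int. \<forall>j. (j \<in> {..<n} \<longrightarrow> f j \<in> {1..m}) \<and> (j \<notin> {..<n} \<longrightarrow> f j = 0)}"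
  have "finite W"
    unfolding W_def by (intro finite_set_of_finite_funs) auto
  then have "finite {A. \<forall>i. (i \<in> {..<n} \<longrightarrow> A i \<in> W) \<and> (i \<notin> {..<n} \<longrightarrow> A i = (\<lambda>_. 0))}"
    by (intro finite_set_of_finite_funs) auto
  moreover have "sym_mats n m \<subseteq> {A. \<forall>i. (i \<in> {..<n} \<longrightarrow> A i \<in> W) \<and> (i \<notin> {..<n} \<longrightarrow> A i = (\<lambda>_. 0))}"
    by (auto simp: sym_mats_def W_def)
  ultimately show ?thesis
    by (rule finite_subset[rotated])
qed

lemma pmf_of_set_Times:
  assumes "finite R" "R \<noteq> {}" "finite T" "T \<noteq> {}"
  shows "pmf_of_set (R \<times> T) = pair_pmf (pmf_of_set R) (pmf_of_set T)"
proof (rule pmf_eqI)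
  fix x :: "'a \<times> 'b"
  show "pmf (pmf_of_set (R \<times> T)) x = pmf (pair_pmf (pmf_of_set R) (pmf_of_set T)) x"
    using assms by (cases x) (simp add: pmf_pair card_cartesian_product split: split_indicator)
qed

lemma map_pmf_of_set_bij_betw_snd:
  assumes "bij_betw f A (B \<times> C)" "finite A" "A \<noteq> {}"
  shows "map_pmf (snd \<circ> f) (pmf_of_set A) = pmf_of_set C"
proof -
  have BC: "finite (B \<times> C)" "B \<times> C \<noteq> {}"
    using assms bij_betw_finite by (auto simp: bij_betw_def)
  then have "finite B" "B \<noteq> {}" "finite C" "C \<noteq> {}"
    by (auto dest: finite_cartesian_productD1 finite_cartesian_productD2)
  then have "map_pmf f (pmf_of_set A) = pair_pmf (pmf_of_set B) (pmf_of_set C)"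
    using map_pmf_of_set_bij_betw[OF assms(1,3,2)] by (simp add: pmf_of_set_Times)
  then show ?thesis
    by (simp add: pmf.map_comp[symmetric] map_snd_pair_pmf)
qed

lemma coprime_prime_power_iff:
  fixes p a :: int
  assumes "prime p" "1 \<le> \<mu>"
  shows "coprime a (p ^ \<mu>) \<longleftrightarrow> \<not> p dvd a"
proof -
  have "coprime a (p ^ \<mu>) \<longleftrightarrow> coprime p a"
    using assms(2) by (simp add: coprime_commute)
  also have "\<dots> \<longleftrightarrow> \<not> p dvd a"
    using assms(1) by (auto intro: prime_imp_coprime simp: coprime_absorb_left)
  finally show ?thesis .
qed

text \<open>Unlike the paper, which divides by \<open>a\<^sub>0\<^sub>0\<close>, this elimination matrix is integral;
  the price is the factor \<open>a\<^sub>0\<^sub>0\<^sup>2\<close> in the lower block.\<close>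

definition pivot_elim :: "(nat \<Rightarrow> nat \<Rightarrow> int) \<Rightarrow> nat \<Rightarrow> nat \<Rightarrow> int" where
  "pivot_elim A i k =
     (if i = 0 then of_bool (k = 0) else A 0 0 * of_bool (k = i) - A 0 i * of_bool (k = 0))"

abbreviation mat_congr :: "nat \<Rightarrow> (nat \<Rightarrow> nat \<Rightarrow> int) \<Rightarrow> (nat \<Rightarrow> nat \<Rightarrow> int) \<Rightarrow> nat \<Rightarrow> nat \<Rightarrow> int" where
  "mat_congr n U A \<equiv> mat_prod n (mat_prod n U A) (mat_transpose U)"

lemma sum_pivot_elim_left:
  assumes "i < n"
  shows "(\<Sum>k<n. pivot_elim A i k * f k) =
           (if i = 0 then f 0 else A 0 0 * f i - A 0 i * f 0)"
proof -
  have "{..<n} \<inter> {k. k = j} = {j}" if "j < n" for j using that by auto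
  then show ?thesis
    using assms by (simp add: pivot_elim_def left_diff_distrib mult.assoc sum_subtractf
        flip: sum_distrib_left)
qed

lemma pivot_elim_mult:
  assumes "i < n" "k < n"
  shows "mat_prod n (pivot_elim A) A i k = (if i = 0 then A 0 k else A 0 0 * A i k - A 0 i * A 0 k)"
  using assms by (simp add: mat_prod_def sum_pivot_elim_left)

lemma mat_congr_pivot_elim:
  assumes "i < n" "j < n" and sym: "\<And>i j. i < n \<Longrightarrow> j < n \<Longrightarrow> A i j = A j i"
  shows "mat_congr n (pivot_elim A) A i j =
    (if i = 0 then (if j = 0 then A 0 0 else 0) else if j = 0 then 0
     else A 0 0 ^ 2 * A i j - A 0 0 * A 0 i * A 0 j)"
proof -
  have "mat_congr n (pivot_elim A) A i j
          = (\<Sum>k<n. pivot_elim A j k * mat_prod n (pivot_elim A) A i k)"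
    using assms by (simp add: mat_prod_def mat_transpose_def mult.commute)
  also have "\<dots> = (if j = 0 then mat_prod n (pivot_elim A) A i 0
                     else A 0 0 * mat_prod n (pivot_elim A) A i j
                          - A 0 j * mat_prod n (pivot_elim A) A i 0)"
    using assms(2) by (rule sum_pivot_elim_left)
  finally show ?thesis
    using assms sym[of i 0] by (auto simp: pivot_elim_mult power2_eq_square algebra_simps)
qed

definition scaled_schur_complement :: "nat \<Rightarrow> int \<Rightarrow> (nat \<Rightarrow> nat \<Rightarrow> int) \<Rightarrow> nat \<Rightarrow> nat \<Rightarrow> int" where
  "scaled_schur_complement n m A = (\<lambda>i j. if i < n - 1 \<and> j < n - 1 then
     red m (A 0 0 ^ 2 * A (Suc i) (Suc j) - A 0 0 * A 0 (Suc i) * A 0 (Suc j)) else 0)"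

lemma lower_block_red_pivot_elim:
  assumes "\<And>i j. i < n \<Longrightarrow> j < n \<Longrightarrow> A i j = A j i"
  shows "lower_block_red n m (mat_congr n (pivot_elim A) A) = scaled_schur_complement n m A"
proof (intro ext)
  fix i j
  show "lower_block_red n m (mat_congr n (pivot_elim A) A) i j = scaled_schur_complement n m A i j"
    using mat_congr_pivot_elim[of "Suc i" n "Suc j" A] assms
    by (auto simp: lower_block_red_def scaled_schur_complement_def less_diff_conv)
qed

definition unit_sym_mats :: "nat \<Rightarrow> int \<Rightarrow> (nat \<Rightarrow> nat \<Rightarrow> int) set" where
  "unit_sym_mats n m = {A \<in> sym_mats n m. coprime (A 0 0) m}"

definition unit_first_rows :: "nat \<Rightarrow> int \<Rightarrow> (nat \<Rightarrow> int) set" where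
  "unit_first_rows n m =
     {r. (\<forall>j. (j < n \<longrightarrow> r j \<in> {1..m}) \<and> (n \<le> j \<longrightarrow> r j = 0)) \<and> coprime (r 0) m}"

text \<open>The inverse of A \<open>\<mapsto>\<close> (A 0, scaled_schur_complement n m A): solve
  \<open>B\<^sub>i\<^sub>j \<equiv> a\<^sub>0\<^sub>0\<^sup>2 a\<^sub>i\<^sub>j - a\<^sub>0\<^sub>0 a\<^sub>0\<^sub>i a\<^sub>0\<^sub>j\<close> for \<open>a\<^sub>i\<^sub>j\<close>, using that \<open>a\<^sub>0\<^sub>0\<^sup>2\<close> is a unit mod m.\<close>

definition sym_of_row_block ::
    "nat \<Rightarrow> int \<Rightarrow> (nat \<Rightarrow> int) \<Rightarrow> (nat \<Rightarrow> nat \<Rightarrow> int) \<Rightarrow> nat \<Rightarrow> nat \<Rightarrow> int" where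
  "sym_of_row_block n m r B = (\<lambda>i j. if i < n \<and> j < n then
     (if i = 0 then r j else if j = 0 then r i
      else red m (modular_inverse m (r 0 ^ 2) * (B (i - 1) (j - 1) + r 0 * r i * r j)))
     else 0)"

lemma scaled_schur_complement_in_sym_mats:
  assumes "0 < m" "A \<in> sym_mats n m"
  shows "scaled_schur_complement n m A \<in> sym_mats (n - 1) m"
  using assms unfolding sym_mats_def scaled_schur_complement_def
  by (auto simp: red_in_Zm[OF assms(1), unfolded atLeastAtMost_iff] ac_simps less_diff_conv)

lemma first_row_in_unit_first_rows:
  assumes "0 < n" "A \<in> unit_sym_mats n m"
  shows "A 0 \<in> unit_first_rows n m"
  using assms by (auto simp: unit_sym_mats_def sym_mats_def unit_first_rows_def)

lemma sym_of_row_block_in_unit_sym_mats: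
  assumes "0 < m" "0 < n" "r \<in> unit_first_rows n m" "B \<in> sym_mats (n - 1) m"
  shows "sym_of_row_block n m r B \<in> unit_sym_mats n m"
proof -
  have B_sym: "B (i - 1) (j - 1) = B (j - 1) (i - 1)" if "0 < i" "i < n" "0 < j" "j < n" for i j
  proof -
    have "i - 1 < n - 1" "j - 1 < n - 1"
      using that by auto
    then show ?thesis
      using assms(4) by (simp add: sym_mats_def)
  qed
  show ?thesis
    using assms B_sym unfolding unit_sym_mats_def sym_mats_def sym_of_row_block_def unit_first_rows_def
    by (auto simp: red_in_Zm[OF assms(1), unfolded atLeastAtMost_iff] ac_simps)
qed

lemma sym_of_row_block_first_row_schur:
  assumes "A \<in> unit_sym_mats n m"
  shows "sym_of_row_block n m (A 0) (scaled_schur_complement n m A) = A"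
proof (intro ext)
  fix i j
  have A: "A \<in> sym_mats n m" "coprime (A 0 0 ^ 2) m"
    using assms by (auto simp: unit_sym_mats_def)
  note inv = cong_modular_inverse1[OF A(2)]
  show "sym_of_row_block n m (A 0) (scaled_schur_complement n m A) i j = A i j"
    using A(1) red_affine_inverse_left[OF inv, of "A i j" "A 0 0 * A 0 i * A 0 j"]
    by (auto simp: sym_of_row_block_def scaled_schur_complement_def sym_mats_def)
qed

lemma scaled_schur_complement_sym_of_row_block:
  assumes "0 < n" "r \<in> unit_first_rows n m" "B \<in> sym_mats (n - 1) m"
  shows "sym_of_row_block n m r B 0 = r"
    and "scaled_schur_complement n m (sym_of_row_block n m r B) = B"
proof -
  show "sym_of_row_block n m r B 0 = r"
    using assms by (auto simp: sym_of_row_block_def unit_first_rows_def)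
  have "coprime (r 0 ^ 2) m"
    using assms(2) by (simp add: unit_first_rows_def)
  note inv = cong_modular_inverse1[OF this]
  show "scaled_schur_complement n m (sym_of_row_block n m r B) = B"
  proof (intro ext)
    fix i j
    show "scaled_schur_complement n m (sym_of_row_block n m r B) i j = B i j"
      using assms(1,3) red_affine_inverse_right[OF inv, of "B i j" "r 0 * r (Suc i) * r (Suc j)"]
      by (auto simp: sym_of_row_block_def scaled_schur_complement_def sym_mats_def)
  qed
qed

lemma bij_betw_first_row_scaled_schur_complement:
  assumes "0 < m" "0 < n"
  shows "bij_betw (\<lambda>A. (A 0, scaled_schur_complement n m A))
           (unit_sym_mats n m) (unit_first_rows n m \<times> sym_mats (n - 1) m)"
proof (rule bij_betw_byWitness[where f' = "\<lambda>(r, B). sym_of_row_block n m r B"])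
  show "(\<lambda>A. (A 0, scaled_schur_complement n m A)) ` unit_sym_mats n m
          \<subseteq> unit_first_rows n m \<times> sym_mats (n - 1) m"
    using assms scaled_schur_complement_in_sym_mats[OF assms(1)]
    by (auto simp: first_row_in_unit_first_rows unit_sym_mats_def)
  show "(\<lambda>(r, B). sym_of_row_block n m r B) ` (unit_first_rows n m \<times> sym_mats (n - 1) m)
          \<subseteq> unit_sym_mats n m"
    using assms by (auto intro: sym_of_row_block_in_unit_sym_mats)
qed (use assms(2) in \<open>auto simp: sym_of_row_block_first_row_schur
      scaled_schur_complement_sym_of_row_block\<close>)

lemma finite_unit_sym_mats: "finite (unit_sym_mats n m)"
  using finite_sym_mats by (rule finite_subset[rotated]) (auto simp: unit_sym_mats_def)

lemma unit_sym_mats_nonempty: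
  assumes "0 < m" "0 < n"
  shows "unit_sym_mats n m \<noteq> {}"
proof -
  have "(\<lambda>i j. if i < n \<and> j < n then 1 else 0) \<in> unit_sym_mats n m"
    using assms by (auto simp: unit_sym_mats_def sym_mats_def)
  then show ?thesis by blast
qed

lemma map_pmf_scaled_schur_complement:
  assumes "0 < m" "0 < n"
  shows "map_pmf (scaled_schur_complement n m) (pmf_of_set (unit_sym_mats n m))
           = random_sym (n - 1) m"
  using map_pmf_of_set_bij_betw_snd[OF bij_betw_first_row_scaled_schur_complement[OF assms]
      finite_unit_sym_mats unit_sym_mats_nonempty[OF assms]]
  by (simp add: random_sym_def o_def)

theorem lemma2p1:
  fixes p :: int and \<mu> n :: nat
  assumes "prime p" and "\<mu> \<ge> 1" and "n > 1"
  defines "m \<equiv> p ^ \<mu>"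
  shows "\<exists>U :: (nat \<Rightarrow> nat \<Rightarrow> int) \<Rightarrow> (nat \<Rightarrow> nat \<Rightarrow> int).
           (\<forall>A \<in> set_pmf (random_sym_cond n m p).
              [mat_prod n (mat_prod n (U A) A) (mat_transpose (U A)) 0 0 = A 0 0] (mod m) \<and>
              (\<forall>j. 0 < j \<and> j < n \<longrightarrow>
                 [mat_prod n (mat_prod n (U A) A) (mat_transpose (U A)) 0 j = 0] (mod m) \<and>
                 [mat_prod n (mat_prod n (U A) A) (mat_transpose (U A)) j 0 = 0] (mod m)))
         \<and> map_pmf (\<lambda>A. lower_block_red n m (mat_prod n (mat_prod n (U A) A) (mat_transpose (U A))))
             (random_sym_cond n m p) = random_sym (n - 1) m"
proof -
  have m: "0 < m" and n: "0 < n"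
    using assms by (simp_all add: m_def prime_gt_0_int)
  have cond: "random_sym_cond n m p = pmf_of_set (unit_sym_mats n m)"
    using coprime_prime_power_iff[OF assms(1,2)]
    by (simp add: random_sym_cond_def unit_sym_mats_def m_def)
  have support: "set_pmf (random_sym_cond n m p) = unit_sym_mats n m"
    using m n by (simp add: cond finite_unit_sym_mats unit_sym_mats_nonempty)
  have sym: "\<And>i j. i < n \<Longrightarrow> j < n \<Longrightarrow> A i j = A j i" if "A \<in> unit_sym_mats n m" for A
    using that by (simp add: unit_sym_mats_def sym_mats_def)
  have "map_pmf (\<lambda>A. lower_block_red n m (mat_congr n (pivot_elim A) A)) (random_sym_cond n m p)
          = map_pmf (scaled_schur_complement n m) (random_sym_cond n m p)"
    using sym by (intro map_pmf_cong) (auto simp: support lower_block_red_pivot_elim)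
  also have "\<dots> = random_sym (n - 1) m"
    using map_pmf_scaled_schur_complement[OF m n] by (simp add: cond)
  finally show ?thesis
    using sym n by (intro exI[of _ pivot_elim] conjI) (auto simp: support mat_congr_pivot_elim)
qed
end
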